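(* Assume (H1), (H2.3) and (H2.4). Then $(I_{X^{+}}-\mathcal{F}_{s}V^{+})|_{\widehat{X}^{+}}$, regarded as an operator from $\widehat{X}^{+}$ to $\widehat{X}^{+}$ (with the norm of $\widehat{X}^{+}$), is invertible with bounded inverse.
   Context: Let $d\ge 1$ be an integer and $\tau>0$, $h>0$ real. $X$, $X^{+}$, $X^{\pm}$ are real normed spaces of functions $[-\tau,0]\to\mathbb{R}^{d}$, $[0,h]\to\mathbb{R}^{d}$, $[-\tau,h]\to\mathbb{R}^{d}$, respectively. $V\colon X\times X^{+}\to X^{\pm}$ and $\mathcal{F}_{s}\colon X^{\pm}\to X^{+}$ are linear; $V^{+}z:=V(0_{X},z)$. Hypotheses: (H1) $I_{X^{+}}-\mathcal{F}_{s}V^{+}\colon X^{+}\to X^{+}$ is invertible with bounded inverse and for each $\phi\in X$ the equation $z=\mathcal{F}_{s}V(\phi,z)$ has a unique solution in $X^{+}$. There is a linear subspace $\widehat{X}^{+}\subseteq X^{+}$ with a norm $\|\cdot\|_{\widehat{X}^{+}}$ making it complete such that (H2.3) there is $\hat{c}_{1}>0$ with $\|z\|_{X^{+}}\le\hat{c}_{1}\|z\|_{\widehat{X}^{+}}$ for all $z\in\widehat{X}^{+}$, and (H2.4) the range of $\mathcal{F}_{s}V^{+}\colon X^{+}\to X^{+}$ is contained in $\widehat{X}^{+}$ and $\mathcal{F}_{s}V^{+}\colon X^{+}\to\widehat{X}^{+}$ is bounded. *)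

theory Defs
  imports "HOL-Analysis.Analysis"
begin

definition norm_on :: "'a::real_vector set \<Rightarrow> ('a \<Rightarrow> real) \<Rightarrow> bool" where
  "norm_on S nh \<longleftrightarrow> subspace S \<and>
     (\<forall>x\<in>S. 0 \<le> nh x) \<and> (\<forall>x\<in>S. nh x = 0 \<longleftrightarrow> x = 0) \<and>
     (\<forall>a. \<forall>x\<in>S. nh (a *\<^sub>R x) = \<bar>a\<bar> * nh x) \<and>
     (\<forall>x\<in>S. \<forall>y\<in>S. nh (x + y) \<le> nh x + nh y)"

definition complete_wrt :: "'a::real_vector set \<Rightarrow> ('a \<Rightarrow> real) \<Rightarrow> bool" where
  "complete_wrt S nh \<longleftrightarrow>
     (\<forall>u. (\<forall>n. u n \<in> S) \<longrightarrow>
          (\<forall>e>0. \<exists>N. \<forall>m\<ge>N. \<forall>n\<ge>N. nh (u m - u n) < e) \<longrightarrow>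
          (\<exists>l\<in>S. (\<lambda>n. nh (u n - l)) \<longlonglongrightarrow> 0))"

end

theory Submission
  imports Defs
begin

text \<open>Write \<open>T = I - K\<close> with \<open>K = Fs V\<^sup>+\<close>. If \<open>g\<close> inverts \<open>T\<close> on the whole space, then
  \<open>g y = y + K (g y)\<close>, so \<open>g\<close> maps \<open>Xh\<close> into itself because \<open>K\<close> takes values in \<open>Xh\<close>;
  hence \<open>T\<close> restricts to a bijection of \<open>Xh\<close> with inverse \<open>g\<close>. The same identity gives
  \<open>nh (g y) \<le> nh y + C \<parallel>g y\<parallel> \<le> nh y + C B \<parallel>y\<parallel> \<le> (1 + C B c\<^sub>1) nh y\<close>.\<close>

lemma norm_on_subspace: "norm_on S nh \<Longrightarrow> subspace S"
  by (simp add: norm_on_def)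

lemma norm_on_triangle: "norm_on S nh \<Longrightarrow> x \<in> S \<Longrightarrow> y \<in> S \<Longrightarrow> nh (x + y) \<le> nh x + nh y"
  by (simp add: norm_on_def)

lemma inverse_id_minus_in_subspace:
  fixes K g :: "'a::real_vector \<Rightarrow> 'a"
  assumes "subspace S" "\<And>z. K z \<in> S" "\<And>z. g z - K (g z) = z" "y \<in> S"
  shows "g y \<in> S"
proof -
  have "y + K (g y) = g y"
    using assms(3)[of y] by (metis add.commute diff_add_cancel)
  moreover have "y + K (g y) \<in> S"
    using assms(1,4,2) by (rule subspace_add)
  ultimately show ?thesis
    by simp
qed

lemma bij_betw_id_minus_subspace:
  fixes K g :: "'a::real_vector \<Rightarrow> 'a"
  assumes S: "subspace S" and K_range: "\<And>z. K z \<in> S"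
    and left_inv: "\<And>z. g (z - K z) = z" and right_inv: "\<And>z. g z - K (g z) = z"
  shows "bij_betw (\<lambda>z. z - K z) S S"
proof (rule bij_betw_imageI)
  show "inj_on (\<lambda>z. z - K z) S"
    by (rule inj_onI) (metis left_inv)
  show "(\<lambda>z. z - K z) ` S = S"
  proof
    show "(\<lambda>z. z - K z) ` S \<subseteq> S"
      using subspace_diff[OF S _ K_range] by blast
    show "S \<subseteq> (\<lambda>z. z - K z) ` S"
    proof
      fix y assume "y \<in> S"
      then have "g y \<in> S"
        by (rule inverse_id_minus_in_subspace[OF S K_range right_inv])
      moreover have "y = g y - K (g y)"
        using right_inv by simp
      ultimately show "y \<in> (\<lambda>z. z - K z) ` S"
        by (rule rev_image_eqI)
    qed
  qed
qed

lemma inv_into_id_minus_subspace: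
  fixes K g :: "'a::real_vector \<Rightarrow> 'a"
  assumes "subspace S" "\<And>z. K z \<in> S"
    and "\<And>z. g (z - K z) = z" "\<And>z. g z - K (g z) = z" "y \<in> S"
  shows "inv_into S (\<lambda>z. z - K z) y = g y"
proof -
  have "inj_on (\<lambda>z. z - K z) S"
    using bij_betw_id_minus_subspace[OF assms(1-4)] by (rule bij_betw_imp_inj_on)
  moreover have "g y \<in> S"
    using assms(1,2,4,5) by (rule inverse_id_minus_in_subspace)
  ultimately show ?thesis
    by (rule inv_into_f_eq) (simp add: assms(4))
qed

lemma norm_on_inverse_id_minus_le:
  fixes K g :: "'a::real_normed_vector \<Rightarrow> 'a"
  assumes nh: "norm_on S nh" and K_range: "\<And>z. K z \<in> S"
    and K_bdd: "\<And>z. nh (K z) \<le> C * norm z" and "0 \<le> C"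
    and right_inv: "\<And>z. g z - K (g z) = z"
    and g_bdd: "\<And>z. norm (g z) \<le> norm z * B" and "0 \<le> B"
    and norm_le: "\<And>z. z \<in> S \<Longrightarrow> norm z \<le> c1 * nh z"
    and y: "y \<in> S"
  shows "nh (g y) \<le> (1 + C * B * c1) * nh y"
proof -
  have triangle: "nh (y + K (g y)) \<le> nh y + nh (K (g y))"
    using nh y K_range by (rule norm_on_triangle)
  have "y + K (g y) = g y"
    using right_inv[of y] by (metis add.commute diff_add_cancel)
  then have "nh (g y) \<le> nh y + nh (K (g y))"
    using triangle by simp
  also have "\<dots> \<le> nh y + C * norm (g y)"
    using K_bdd by simp
  also have "\<dots> \<le> nh y + C * (norm y * B)"
    using g_bdd \<open>0 \<le> C\<close> by (intro add_left_mono mult_left_mono)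
  also have "\<dots> \<le> nh y + C * (c1 * nh y * B)"
    using norm_le[OF y] \<open>0 \<le> C\<close> \<open>0 \<le> B\<close> by (intro add_left_mono mult_left_mono mult_right_mono)
  also have "\<dots> = (1 + C * B * c1) * nh y"
    by (simp add: algebra_simps)
  finally show ?thesis .
qed

theorem lemma4p6:
  fixes V :: "'x::real_normed_vector \<Rightarrow> 'p::real_normed_vector \<Rightarrow> 'q::real_normed_vector"
    and Fs :: "'q \<Rightarrow> 'p"
    and Xh :: "'p set" and nh :: "'p \<Rightarrow> real"
  assumes linV: "linear (\<lambda>(\<phi>, z). V \<phi> z)"
    and linF: "linear Fs"
    and H1_inv: "\<exists>g. bounded_linear g \<and> (\<forall>z. g (z - Fs (V 0 z)) = z)
                     \<and> (\<forall>z. g z - Fs (V 0 (g z)) = z)"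
    and H1_uniq: "\<forall>\<phi>. \<exists>!z. z = Fs (V \<phi> z)"
    and Xh_norm: "norm_on Xh nh"
    and Xh_complete: "complete_wrt Xh nh"
    and H23: "\<exists>c1>0. \<forall>z\<in>Xh. norm z \<le> c1 * nh z"
    and H24_range: "\<forall>z. Fs (V 0 z) \<in> Xh"
    and H24_bdd: "\<exists>C. \<forall>z. nh (Fs (V 0 z)) \<le> C * norm z"
  shows "bij_betw (\<lambda>z. z - Fs (V 0 z)) Xh Xh \<and>
         (\<exists>C. \<forall>z\<in>Xh. nh (inv_into Xh (\<lambda>z. z - Fs (V 0 z)) z) \<le> C * nh z)"
proof -
  obtain g where g: "bounded_linear g" and left_inv: "\<And>z. g (z - Fs (V 0 z)) = z"
    and right_inv: "\<And>z. g z - Fs (V 0 (g z)) = z"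
    using H1_inv by blast
  obtain B where B: "\<And>z. norm (g z) \<le> norm z * B" "0 \<le> B"
    using bounded_linear.nonneg_bounded[OF g] by blast
  obtain c1 where c1: "\<And>z. z \<in> Xh \<Longrightarrow> norm z \<le> c1 * nh z"
    using H23 by blast
  obtain C where K_bdd: "\<And>z. nh (Fs (V 0 z)) \<le> C * norm z"
    using H24_bdd by blast
  have C: "nh (Fs (V 0 z)) \<le> \<bar>C\<bar> * norm z" for z
    using K_bdd[of z] mult_right_mono[OF abs_ge_self norm_ge_zero, of C z] by linarith
  have Xh: "subspace Xh"
    using Xh_norm by (rule norm_on_subspace)
  note range = H24_range[rule_format]
  have "nh (inv_into Xh (\<lambda>z. z - Fs (V 0 z)) y) \<le> (1 + \<bar>C\<bar> * B * c1) * nh y"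
    if "y \<in> Xh" for y
    using inv_into_id_minus_subspace[OF Xh range left_inv right_inv that]
      norm_on_inverse_id_minus_le[OF Xh_norm range C abs_ge_zero right_inv B c1 that]
    by (simp only:)
  then show ?thesis
    using bij_betw_id_minus_subspace[OF Xh range left_inv right_inv] by blast
qed

end
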